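(* Let $G=(V,E)$ be a locally finite, connected, infinite graph. Then $p_{\mathrm{T,E}}\le p_{\mathrm{T,V}}$. If moreover $G$ has bounded degree, then $p_{\mathrm{T,E}}=p_{\mathrm{T,V}}$.
   Context: Fix a vertex $x$ (the thresholds do not depend on $x$). Consider Bernoulli$(p)$ bond percolation on $G$ (each edge open independently with probability $p$), with expectation $\mathbb{E}_p$; $C(x)$ is the open cluster of $x$, and $|C(x)|_V$, $|C(x)|_E$ denote its numbers of vertices and edges. Define $p_{\mathrm{T,V}}=\sup\{p\ge0:\mathbb{E}_p[|C(x)|_V]<\infty\}$ and $p_{\mathrm{T,E}}=\sup\{p\ge0:\mathbb{E}_p[|C(x)|_E]<\infty\}$. *)

theory Defs
  imports "HOL-Probability.Probability"
begin

definition simple_graph :: "'a set \<Rightarrow> 'a set set \<Rightarrow> bool" where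
  "simple_graph V E \<longleftrightarrow> (\<forall>e\<in>E. e \<subseteq> V \<and> card e = 2)"

definition adj :: "'a set set \<Rightarrow> ('a \<times> 'a) set" where
  "adj E = {(u, v). {u, v} \<in> E}"

definition graph_connected :: "'a set \<Rightarrow> 'a set set \<Rightarrow> bool" where
  "graph_connected V E \<longleftrightarrow> (\<forall>u\<in>V. \<forall>v\<in>V. (u, v) \<in> (adj E)\<^sup>*)"

definition locally_finite :: "'a set \<Rightarrow> 'a set set \<Rightarrow> bool" where
  "locally_finite V E \<longleftrightarrow> (\<forall>v\<in>V. finite {e\<in>E. v \<in> e})"

definition bounded_degree :: "'a set \<Rightarrow> 'a set set \<Rightarrow> bool" where
  "bounded_degree V E \<longleftrightarrow> (\<exists>D::nat. \<forall>v\<in>V. card {e\<in>E. v \<in> e} \<le> D)"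

text \<open>Bernoulli(p) bond percolation: product measure on configurations of the edges
  (an edge e is open in configuration \<omega> iff \<omega> e).\<close>

definition perc :: "'a set set \<Rightarrow> real \<Rightarrow> ('a set \<Rightarrow> bool) measure" where
  "perc E p = (\<Pi>\<^sub>M e\<in>E. measure_pmf (bernoulli_pmf p))"

definition open_adj :: "'a set set \<Rightarrow> ('a set \<Rightarrow> bool) \<Rightarrow> ('a \<times> 'a) set" where
  "open_adj E \<omega> = {(u, v). {u, v} \<in> E \<and> \<omega> {u, v}}"

definition cluster :: "'a set set \<Rightarrow> ('a set \<Rightarrow> bool) \<Rightarrow> 'a \<Rightarrow> 'a set" where
  "cluster E \<omega> x = {y. (x, y) \<in> (open_adj E \<omega>)\<^sup>*}"

definition cluster_edges :: "'a set set \<Rightarrow> ('a set \<Rightarrow> bool) \<Rightarrow> 'a \<Rightarrow> 'a set set" where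
  "cluster_edges E \<omega> x = {e\<in>E. \<omega> e \<and> e \<subseteq> cluster E \<omega> x}"

text \<open>Expected sizes (in [0, \<infinity>]; an infinite cluster has size \<infinity>).\<close>
definition exp_cluster_V :: "'a set set \<Rightarrow> real \<Rightarrow> 'a \<Rightarrow> ennreal" where
  "exp_cluster_V E p x = (\<integral>\<^sup>+ \<omega>. emeasure (count_space UNIV) (cluster E \<omega> x) \<partial>perc E p)"

definition exp_cluster_E :: "'a set set \<Rightarrow> real \<Rightarrow> 'a \<Rightarrow> ennreal" where
  "exp_cluster_E E p x = (\<integral>\<^sup>+ \<omega>. emeasure (count_space UNIV) (cluster_edges E \<omega> x) \<partial>perc E p)"

definition pT_V :: "'a set set \<Rightarrow> 'a \<Rightarrow> real" where
  "pT_V E x = Sup {p. 0 \<le> p \<and> p \<le> 1 \<and> exp_cluster_V E p x < \<infinity>}"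

definition pT_E :: "'a set set \<Rightarrow> 'a \<Rightarrow> real" where
  "pT_E E x = Sup {p. 0 \<le> p \<and> p \<le> 1 \<and> exp_cluster_E E p x < \<infinity>}"

end

theory Submission
  imports Defs
begin

text \<open>Choosing for every vertex y \<noteq> x of the open cluster an open edge to a vertex closer to x
  (a breadth-first spanning tree) maps the cluster minus x injectively into its edges, so
  |C(x)|_V \<le> |C(x)|_E + 1. Conversely every edge of the cluster contains a cluster vertex, so
  |C(x)|_E \<le> D |C(x)|_V when all degrees are at most D. Taking expectations, finiteness of
  E|C(x)|_E implies finiteness of E|C(x)|_V, and under bounded degree the converse holds too.
  Since p = 0 is admissible for both thresholds, the suprema compare as the sets of admissible p do.
  The cluster sizes need not be measurable, so the integral estimates are proved for arbitrary
  nonnegative functions.\<close>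

abbreviation ecard :: "'b set \<Rightarrow> ennreal" where
  "ecard A \<equiv> emeasure (count_space UNIV) A"

lemma nn_integral_add_const_le:
  assumes "c < \<infinity>"
  shows "(\<integral>\<^sup>+ x. f x + c \<partial>M) \<le> integral\<^sup>N M f + c * emeasure M (space M)"
  unfolding nn_integral_def[of M "\<lambda>x. f x + c"]
proof (rule SUP_least)
  fix g assume "g \<in> {g. simple_function M g \<and> g \<le> (\<lambda>x. f x + c)}"
  then have g: "simple_function M g" and g_le: "\<And>x. g x \<le> f x + c" by (auto simp: le_fun_def)
  define h where "h x = g x - c" for x
  have h: "simple_function M h"
    unfolding h_def using simple_function_compose[OF g, of "\<lambda>y. y - c"] by (simp add: o_def)
  have h_le: "h \<le> f"
    unfolding h_def le_fun_def using g_le assms by (auto simp: ennreal_minus_le_iff add.commute)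
  have "g x \<le> h x + c" for x
  proof (cases "c \<le> g x")
    case True
    then show ?thesis unfolding h_def using ennreal_ineq_diff_add[OF True] by (simp add: add.commute)
  next
    case False
    then show ?thesis by (intro add_increasing) auto
  qed
  then have "integral\<^sup>S M g \<le> integral\<^sup>S M (\<lambda>x. h x + c)"
    using g h by (intro simple_integral_mono) auto
  also have "\<dots> = integral\<^sup>S M h + c * emeasure M (space M)"
    using h by (subst simple_integral_add) auto
  also have "integral\<^sup>S M h \<le> integral\<^sup>N M f"
    unfolding nn_integral_def using h h_le by (auto intro!: SUP_upper)
  finally show "integral\<^sup>S M g \<le> integral\<^sup>N M f + c * emeasure M (space M)"
    by (simp add: add_right_mono)
qed

lemma nn_integral_cmult_le:
  assumes "c < \<infinity>"
  shows "(\<integral>\<^sup>+ x. c * f x \<partial>M) \<le> c * integral\<^sup>N M f"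
proof (cases "c = 0")
  case False
  show ?thesis
    unfolding nn_integral_def[of M "\<lambda>x. c * f x"]
  proof (rule SUP_least)
    fix g assume "g \<in> {g. simple_function M g \<and> g \<le> (\<lambda>x. c * f x)}"
    then have g: "simple_function M g" and g_le: "\<And>x. g x \<le> c * f x" by (auto simp: le_fun_def)
    define h where "h x = g x / c" for x
    have h: "simple_function M h"
      unfolding h_def using simple_function_compose[OF g, of "\<lambda>y. y / c"] by (simp add: o_def)
    have h_le: "h \<le> f"
      unfolding h_def le_fun_def using g_le False assms
      by (intro allI divide_le_posI_ennreal) (auto simp: zero_less_iff_neq_zero)
    have "g = (\<lambda>x. c * h x)"
      unfolding h_def using ennreal_mult_divide_eq False assms
      by (simp add: ennreal_times_divide mult.commute)
    then have "integral\<^sup>S M g = c * integral\<^sup>S M h" using h by simp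
    also have "integral\<^sup>S M h \<le> integral\<^sup>N M f"
      unfolding nn_integral_def using h h_le by (auto intro!: SUP_upper)
    finally show "integral\<^sup>S M g \<le> c * integral\<^sup>N M f"
      by (simp add: mult_left_mono)
  qed
qed simp

lemma ecard_le_of_inj_on:
  assumes "inj_on f A" "f ` A \<subseteq> B"
  shows "ecard A \<le> ecard B"
proof -
  have "ecard A = ecard (f ` A)"
    using assms(1) by (simp add: emeasure_count_space finite_image_iff card_image)
  also have "\<dots> \<le> ecard B" using assms(2) by (intro emeasure_mono) auto
  finally show ?thesis .
qed

lemma ecard_UN_le:
  assumes "\<And>v. v \<in> A \<Longrightarrow> ecard (S v) \<le> c"
  shows "ecard (\<Union>v\<in>A. S v) \<le> c * ecard A"
proof (cases "finite A")
  case True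
  have "ecard (\<Union>v\<in>A. S v) \<le> (\<Sum>v\<in>A. ecard (S v))"
    using True by (intro emeasure_subadditive_finite) auto
  also have "\<dots> \<le> (\<Sum>v\<in>A. c)" using assms by (intro sum_mono)
  also have "\<dots> = c * ecard A" using True by (simp add: mult.commute)
  finally show ?thesis .
next
  case False
  show ?thesis
  proof (cases "c = 0")
    case True
    then show ?thesis using assms by (simp add: emeasure_count_space_eq_0)
  qed (use False in \<open>simp add: ennreal_mult_top\<close>)
qed

lemma reachable_parent_edge_inj:
  obtains f where "\<And>y. y \<in> R\<^sup>* `` {x} - {x} \<Longrightarrow> (f y, y) \<in> R \<and> f y \<in> R\<^sup>* `` {x}"
    and "inj_on (\<lambda>y. {f y, y}) (R\<^sup>* `` {x} - {x})"
proof -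
  define d where "d y = (LEAST n. (x, y) \<in> R ^^ n)" for y
  have "\<exists>u. (u, y) \<in> R \<and> u \<in> R\<^sup>* `` {x} \<and> d u < d y" if y: "y \<in> R\<^sup>* `` {x} - {x}" for y
  proof -
    from y obtain n where "(x, y) \<in> R ^^ n" by (auto simp: rtrancl_power)
    then have xy: "(x, y) \<in> R ^^ d y" unfolding d_def by (rule LeastI)
    then obtain m where m: "d y = Suc m" using y by (cases "d y") auto
    from xy obtain u where xu: "(x, u) \<in> R ^^ m" and "(u, y) \<in> R" unfolding m by auto
    moreover have "d u \<le> m" unfolding d_def using xu by (rule Least_le)
    ultimately show ?thesis using m relpow_imp_rtrancl[OF xu] by auto
  qed
  then obtain f where f: "\<And>y. y \<in> R\<^sup>* `` {x} - {x} \<Longrightarrow> (f y, y) \<in> R \<and> f y \<in> R\<^sup>* `` {x} \<and> d (f y) < d y"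
    by metis
  have "inj_on (\<lambda>y. {f y, y}) (R\<^sup>* `` {x} - {x})"
  proof (rule inj_onI)
    fix y z assume "y \<in> R\<^sup>* `` {x} - {x}" "z \<in> R\<^sup>* `` {x} - {x}" "{f y, y} = {f z, z}"
    \<comment> \<open>two distinct such vertices would be each other's parents, contradicting d (f y) < d y\<close>
    then show "y = z" using f[of y] f[of z] by (auto simp: doubleton_eq_iff)
  qed
  with f that show thesis by blast
qed

lemma cluster_eq_Image: "cluster E \<omega> x = (open_adj E \<omega>)\<^sup>* `` {x}"
  unfolding cluster_def by auto

lemma cluster_subset:
  assumes "simple_graph V E" "x \<in> V"
  shows "cluster E \<omega> x \<subseteq> V"
proof
  fix y assume "y \<in> cluster E \<omega> x"
  then have "(x, y) \<in> (open_adj E \<omega>)\<^sup>*" unfolding cluster_def by simp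
  then show "y \<in> V"
  proof induction
    case (step y z)
    then have "{y, z} \<in> E" by (simp add: open_adj_def)
    then show ?case using assms(1) unfolding simple_graph_def by blast
  qed (rule assms(2))
qed

lemma ecard_cluster_le: "ecard (cluster E \<omega> x) \<le> ecard (cluster_edges E \<omega> x) + 1"
proof -
  let ?C = "cluster E \<omega> x"
  obtain f where f: "\<And>y. y \<in> ?C - {x} \<Longrightarrow> (f y, y) \<in> open_adj E \<omega> \<and> f y \<in> ?C"
    and inj: "inj_on (\<lambda>y. {f y, y}) (?C - {x})"
    using reachable_parent_edge_inj[of "open_adj E \<omega>" x, folded cluster_eq_Image] by blast
  have tree_edges: "(\<lambda>y. {f y, y}) ` (?C - {x}) \<subseteq> cluster_edges E \<omega> x"
  proof (rule image_subsetI)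
    fix y assume "y \<in> ?C - {x}"
    with f[OF this] show "{f y, y} \<in> cluster_edges E \<omega> x"
      unfolding cluster_edges_def open_adj_def by simp
  qed
  have "ecard ?C \<le> ecard ((?C - {x}) \<union> {x})" by (rule emeasure_mono) auto
  also have "\<dots> \<le> ecard (?C - {x}) + ecard {x}" by (rule emeasure_subadditive) auto
  also have "\<dots> \<le> ecard (cluster_edges E \<omega> x) + 1"
    using ecard_le_of_inj_on[OF inj tree_edges] by (simp add: add_right_mono)
  finally show ?thesis .
qed

lemma ecard_cluster_edges_le:
  assumes "simple_graph V E" "x \<in> V" "\<And>v. v \<in> V \<Longrightarrow> ecard {e\<in>E. v \<in> e} \<le> c"
  shows "ecard (cluster_edges E \<omega> x) \<le> c * ecard (cluster E \<omega> x)"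
proof -
  let ?C = "cluster E \<omega> x"
  have "cluster_edges E \<omega> x \<subseteq> (\<Union>v\<in>?C. {e\<in>E. v \<in> e})"
  proof
    fix e assume e: "e \<in> cluster_edges E \<omega> x"
    then have "e \<noteq> {}" using assms(1) unfolding cluster_edges_def simple_graph_def by fastforce
    with e show "e \<in> (\<Union>v\<in>?C. {e\<in>E. v \<in> e})" unfolding cluster_edges_def by blast
  qed
  then have "ecard (cluster_edges E \<omega> x) \<le> ecard (\<Union>v\<in>?C. {e\<in>E. v \<in> e})"
    by (intro emeasure_mono) auto
  also have "\<dots> \<le> c * ecard ?C"
    using cluster_subset[OF assms(1,2)] assms(3) by (intro ecard_UN_le) auto
  finally show ?thesis .
qed

lemma cluster_edges_empty:
  assumes "simple_graph V E" and closed: "\<And>e. e \<in> E \<Longrightarrow> x \<in> e \<Longrightarrow> \<not> \<omega> e"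
  shows "cluster_edges E \<omega> x = {}"
proof -
  have "cluster E \<omega> x \<subseteq> {x}"
  proof
    fix y assume "y \<in> cluster E \<omega> x"
    then have "(x, y) \<in> (open_adj E \<omega>)\<^sup>*" unfolding cluster_def by simp
    then show "y \<in> {x}"
      by (cases rule: converse_rtranclE) (use closed in \<open>auto simp: open_adj_def\<close>)
  qed
  moreover have "\<not> e \<subseteq> {x}" if "e \<in> E" for e
    using assms(1) that card_mono[of "{x}" e] unfolding simple_graph_def by fastforce
  ultimately show ?thesis unfolding cluster_edges_def by blast
qed

lemma perc_prob_space: "prob_space (perc E p)"
  unfolding perc_def by (rule prob_space_PiM) (rule prob_space_measure_pmf)

lemma AE_perc_zero_closed: "e \<in> E \<Longrightarrow> AE \<omega> in perc E 0. \<not> \<omega> e"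
  unfolding perc_def
  by (rule AE_PiM_component) (auto simp: prob_space_measure_pmf AE_measure_pmf_iff set_pmf_iff)

lemma exp_cluster_E_zero:
  assumes "simple_graph V E" "finite {e\<in>E. x \<in> e}"
  shows "exp_cluster_E E 0 x = 0"
proof -
  have "AE \<omega> in perc E 0. \<forall>e\<in>{e\<in>E. x \<in> e}. \<not> \<omega> e"
    using assms(2) by (intro eventually_ball_finite ballI AE_perc_zero_closed) auto
  then have "AE \<omega> in perc E 0. ecard (cluster_edges E \<omega> x) = 0"
    by eventually_elim (use cluster_edges_empty[OF assms(1)] in auto)
  then show ?thesis unfolding exp_cluster_E_def by (simp add: nn_integral_cong_AE)
qed

lemma exp_cluster_V_le: "exp_cluster_V E p x \<le> exp_cluster_E E p x + 1"
proof -
  interpret prob_space "perc E p" by (rule perc_prob_space)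
  have "exp_cluster_V E p x \<le> (\<integral>\<^sup>+ \<omega>. ecard (cluster_edges E \<omega> x) + 1 \<partial>perc E p)"
    unfolding exp_cluster_V_def by (intro nn_integral_mono ecard_cluster_le)
  also have "\<dots> \<le> exp_cluster_E E p x + 1 * emeasure (perc E p) (space (perc E p))"
    unfolding exp_cluster_E_def by (rule nn_integral_add_const_le) simp
  also have "\<dots> = exp_cluster_E E p x + 1" by (simp add: emeasure_space_1)
  finally show ?thesis .
qed

lemma exp_cluster_E_le:
  assumes "simple_graph V E" "x \<in> V" "\<And>v. v \<in> V \<Longrightarrow> ecard {e\<in>E. v \<in> e} \<le> c" "c < \<infinity>"
  shows "exp_cluster_E E p x \<le> c * exp_cluster_V E p x"
proof -
  have "exp_cluster_E E p x \<le> (\<integral>\<^sup>+ \<omega>. c * ecard (cluster E \<omega> x) \<partial>perc E p)"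
    unfolding exp_cluster_E_def using assms(1-3) by (intro nn_integral_mono ecard_cluster_edges_le)
  also have "\<dots> \<le> c * exp_cluster_V E p x"
    unfolding exp_cluster_V_def using assms(4) by (rule nn_integral_cmult_le)
  finally show ?thesis .
qed

lemma exp_cluster_V_finite: "exp_cluster_E E p x < \<infinity> \<Longrightarrow> exp_cluster_V E p x < \<infinity>"
  by (rule le_less_trans[OF exp_cluster_V_le]) simp

lemma exp_cluster_E_finite:
  assumes "simple_graph V E" "locally_finite V E" "bounded_degree V E" "x \<in> V"
    and "exp_cluster_V E p x < \<infinity>"
  shows "exp_cluster_E E p x < \<infinity>"
proof -
  obtain D where D: "\<And>v. v \<in> V \<Longrightarrow> card {e\<in>E. v \<in> e} \<le> D"
    using assms(3) unfolding bounded_degree_def by blast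
  have deg: "ecard {e\<in>E. v \<in> e} \<le> of_nat D" if "v \<in> V" for v
    using D[OF that] assms(2) that unfolding locally_finite_def by simp
  have "exp_cluster_E E p x \<le> of_nat D * exp_cluster_V E p x"
    using deg of_nat_less_top[of D] by (intro exp_cluster_E_le[OF assms(1,4)]) simp_all
  also have "\<dots> < \<infinity>"
    using assms(5) by (simp add: ennreal_mult_less_top of_nat_less_top)
  finally show ?thesis .
qed

theorem lemma2p2:
  fixes V :: "'a set" and E :: "'a set set" and x :: 'a
  assumes "simple_graph V E"
    and "locally_finite V E"
    and "graph_connected V E"
    and "infinite V"
    and "x \<in> V"
  shows "pT_E E x \<le> pT_V E x \<and> (bounded_degree V E \<longrightarrow> pT_E E x = pT_V E x)"
proof -
  let ?P_E = "{p. 0 \<le> p \<and> p \<le> 1 \<and> exp_cluster_E E p x < \<infinity>}"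
  let ?P_V = "{p. 0 \<le> p \<and> p \<le> 1 \<and> exp_cluster_V E p x < \<infinity>}"
  have "0 \<in> ?P_E"
    using exp_cluster_E_zero[OF assms(1)] assms(2,5) unfolding locally_finite_def by simp
  moreover have E_V: "?P_E \<subseteq> ?P_V"
    using exp_cluster_V_finite by auto
  ultimately have "pT_E E x \<le> pT_V E x"
    unfolding pT_E_def pT_V_def by (intro cSup_subset_mono) (auto intro: bdd_aboveI[of _ 1])
  moreover have "?P_V \<subseteq> ?P_E" if "bounded_degree V E"
    using exp_cluster_E_finite[OF assms(1,2) that assms(5)] by auto
  ultimately show ?thesis using E_V unfolding pT_E_def pT_V_def by auto
qed

end
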